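(* Let $I\subset\mathbb R$ be an interval and $\alpha\in C^\infty(I,C^\infty(\mathbb S))$ a real-valued solution of $\frac{\partial\alpha_\tau}{\partial\tau}=-\alpha_\tau(\Lambda\alpha_\tau)+(\mathcal H\alpha_\tau)(D\alpha_\tau)$ on $I$. Then $$\frac{\partial}{\partial\tau}\int_0^{2\pi}\alpha_\tau\,d\theta=-4\langle\alpha_{\tau,+},\Lambda\alpha_{\tau,+}\rangle\le0\quad(\tau\in I),$$ so $\int_0^{2\pi}\alpha_\tau d\theta$ is non-increasing in $\tau$; and if this derivative vanishes at some $\tau\in I$, then $\alpha_\tau$ is a constant function.
   Context: $\langle u,v\rangle=\int_0^{2\pi}u\bar v\,d\theta$; $u=\sum\hat u_ke^{ik\theta}$. $D=-i\,d/d\theta$, $\Lambda e^{in\theta}=|n|e^{in\theta}$, $\mathcal H\mathbf 1=0$, $\mathcal He^{in\theta}=\mathrm{sgn}(n)e^{in\theta}$ ($n\ne0$). For real $b$, $b_+=\hat b_0/2+\sum_{k\ge1}\hat b_ke^{ik\theta}$, and $\alpha_{\tau,+}=(\alpha_\tau)_+$. *)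

theory Defs
  imports "HOL-Analysis.Analysis"
begin

text \<open>C-infinity smoothness (relative to a set S) of a real-valued function on a
real normed vector space: continuous, differentiable within S, and every
directional derivative is again smooth.\<close>
coinductive smooth_on :: "'a::real_normed_vector set \<Rightarrow> ('a \<Rightarrow> real) \<Rightarrow> bool" where
  "\<lbrakk> continuous_on S f;
     \<forall>x\<in>S. f differentiable (at x within S);
     \<forall>v. smooth_on S (\<lambda>x. frechet_derivative f (at x within S) v) \<rbrakk>
   \<Longrightarrow> smooth_on S f"

text \<open>Fourier coefficients: u = sum_k (fc u k) e^{ik theta}.\<close>
definition fc :: "(real \<Rightarrow> complex) \<Rightarrow> int \<Rightarrow> complex" where
  "fc u k = integral {0..2*pi} (\<lambda>\<theta>. u \<theta> * exp (- (\<i> * of_int k * of_real \<theta>))) / (2 * of_real pi)"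

definition ip :: "(real \<Rightarrow> complex) \<Rightarrow> (real \<Rightarrow> complex) \<Rightarrow> complex" where
  "ip u v = integral {0..2*pi} (\<lambda>\<theta>. u \<theta> * cnj (v \<theta>))"

definition Lam :: "(real \<Rightarrow> complex) \<Rightarrow> real \<Rightarrow> complex" where
  "Lam u \<theta> = (\<Sum>\<^sub>\<infinity>n\<in>(UNIV::int set). of_int \<bar>n\<bar> * fc u n * exp (\<i> * of_int n * of_real \<theta>))"

definition Hil :: "(real \<Rightarrow> complex) \<Rightarrow> real \<Rightarrow> complex" where
  "Hil u \<theta> = (\<Sum>\<^sub>\<infinity>n\<in>(UNIV::int set). of_int (sgn n) * fc u n * exp (\<i> * of_int n * of_real \<theta>))"

definition Dop :: "(real \<Rightarrow> complex) \<Rightarrow> real \<Rightarrow> complex" where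
  "Dop u \<theta> = - \<i> * vector_derivative u (at \<theta>)"

definition pos_part :: "(real \<Rightarrow> complex) \<Rightarrow> real \<Rightarrow> complex" where
  "pos_part u \<theta> = fc u 0 / 2 + (\<Sum>\<^sub>\<infinity>k\<in>{1::int..}. fc u k * exp (\<i> * of_int k * of_real \<theta>))"

end

theory Submission
  imports Defs
begin

text \<open>
  Expand \<open>\<alpha>\<^sub>\<tau> = \<Sum>\<^sub>k a\<^sub>k e\<^sup>i\<^sup>k\<^sup>\<theta>\<close>. Smoothness in \<open>\<theta>\<close> makes \<open>\<Sum>\<^sub>k |k| |a\<^sub>k|\<close> finite, and
  \<open>a\<^sub>-\<^sub>k\<close> is the conjugate of \<open>a\<^sub>k\<close> because \<open>\<alpha>\<^sub>\<tau>\<close> is real. Integrating the equation over a period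
  term by term gives \<open>\<integral> \<alpha> \<Lambda>\<alpha> = 2\<pi> \<Sum>\<^sub>k |k| |a\<^sub>k|\<^sup>2\<close> and \<open>\<integral> (H\<alpha>) (D\<alpha>) = -2\<pi> \<Sum>\<^sub>k |k| |a\<^sub>k|\<^sup>2\<close>,
  so, differentiating under the integral sign, the derivative of \<open>\<integral> \<alpha>\<^sub>\<tau>\<close> is \<open>-4\<pi> \<Sum>\<^sub>k |k| |a\<^sub>k|\<^sup>2\<close>.
  The positive part keeps only the modes \<open>k \<ge> 1\<close> (the mode \<open>0\<close> has weight \<open>|k| = 0\<close>), so by the
  symmetry \<open>|a\<^sub>-\<^sub>k| = |a\<^sub>k|\<close> it carries half of that sum: \<open>\<langle>\<alpha>\<^sub>+, \<Lambda>\<alpha>\<^sub>+\<rangle> = \<pi> \<Sum>\<^sub>k |k| |a\<^sub>k|\<^sup>2 \<ge> 0\<close>.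
  Monotonicity follows by the mean value theorem. If the derivative vanishes, then \<open>a\<^sub>k = 0\<close> for
  \<open>k \<noteq> 0\<close>, so \<open>\<partial>\<^sub>\<theta>\<alpha>\<^sub>\<tau>\<close> has no nonzero Fourier coefficient and vanishes by uniqueness of
  Fourier coefficients, which is proved through Stone--Weierstrass on the circle.
\<close>

section \<open>Fourier modes and coefficients\<close>

abbreviation fourier_mode :: "int \<Rightarrow> real \<Rightarrow> complex" where
  "fourier_mode k \<theta> \<equiv> exp (\<i> * of_int k * of_real \<theta>)"

lemma has_vector_derivative_fourier_mode:
  "(fourier_mode k has_vector_derivative (\<i> * of_int k * fourier_mode k \<theta>)) (at \<theta> within S)"
proof -
  have "((\<lambda>z. exp (\<i> * of_int k * z)) has_field_derivative exp (\<i> * of_int k * of_real \<theta>) * (\<i> * of_int k))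
          (at (of_real \<theta>))"
    by (auto intro!: derivative_eq_intros)
  from has_vector_derivative_real_field[OF this] show ?thesis
    by (auto intro: has_vector_derivative_at_within simp: mult_ac)
qed

lemma norm_fourier_mode [simp]: "norm (fourier_mode k \<theta>) = 1"
  by (metis norm_exp_i_times mult.assoc of_real_mult of_real_of_int_eq)

lemma fourier_mode_2pi: "fourier_mode k (2 * pi) = 1"
  by (metis exp_2pi_1_int mult.assoc mult.commute of_real_mult of_real_numeral)

lemma fourier_mode_add: "fourier_mode j \<theta> * fourier_mode k \<theta> = fourier_mode (j + k) \<theta>"
  by (simp add: exp_add[symmetric] algebra_simps)

lemma has_integral_fourier_mode:
  "(fourier_mode k has_integral (if k = 0 then 2 * pi else 0)) {0..2*pi}"
proof (cases "k = 0")
  case True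
  then show ?thesis
    using has_integral_const_real[of "1::complex" 0 "2*pi"] by (simp add: scaleR_conv_of_real)
next
  case False
  have "((\<lambda>\<theta>. \<i> * of_int k * fourier_mode k \<theta>) has_integral fourier_mode k (2*pi) - fourier_mode k 0)
          {0..2*pi}"
    by (rule fundamental_theorem_of_calculus) (auto intro: has_vector_derivative_fourier_mode)
  from has_integral_mult_right[OF this, of "1 / (\<i> * of_int k)"] False show ?thesis
    unfolding fourier_mode_2pi by (simp add: field_simps)
qed

lemma fc_eq: "fc w k = integral {0..2*pi} (\<lambda>\<theta>. w \<theta> * fourier_mode (-k) \<theta>) / (2 * pi)"
  unfolding fc_def by simp

lemma integral_fourier_mode_mult:
  "integral {0..2*pi} (\<lambda>\<theta>. fourier_mode k \<theta> * w \<theta>) = 2 * pi * fc w (-k)"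
  unfolding fc_eq by (simp add: mult.commute)

lemma fc_fourier_mode: "fc (fourier_mode m) k = (if k = m then 1 else 0)"
proof -
  have "integral {0..2*pi} (\<lambda>\<theta>. fourier_mode m \<theta> * fourier_mode (-k) \<theta>)
      = (if m + - k = 0 then 2 * pi else 0)"
    unfolding fourier_mode_add by (rule integral_unique[OF has_integral_fourier_mode])
  then show ?thesis
    unfolding fc_eq by auto
qed

lemma fc_cmult: "fc (\<lambda>\<theta>. c * w \<theta>) k = c * fc w k"
  unfolding fc_def by (simp add: mult.assoc)

lemma fc_cnj: "fc (\<lambda>\<theta>. cnj (w \<theta>)) (-k) = cnj (fc w k)"
proof -
  have "cnj (integral {0..2*pi} (\<lambda>\<theta>. w \<theta> * fourier_mode (-k) \<theta>))
      = integral {0..2*pi} (\<lambda>\<theta>. cnj (w \<theta>) * fourier_mode k \<theta>)"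
    by (simp add: Henstock_Kurzweil_Integration.integral_cnj exp_cnj)
  then show ?thesis
    unfolding fc_eq by simp
qed

lemma fc_of_real_uminus:
  "fc (\<lambda>\<theta>. complex_of_real (u \<theta>)) (-k) = cnj (fc (\<lambda>\<theta>. complex_of_real (u \<theta>)) k)"
  using fc_cnj[of "\<lambda>\<theta>. complex_of_real (u \<theta>)" k] by simp

lemma norm_fc_le:
  assumes "continuous_on {0..2*pi} w" and "\<And>\<theta>. \<theta> \<in> {0..2*pi} \<Longrightarrow> norm (w \<theta>) \<le> B"
  shows "norm (fc w k) \<le> B"
proof -
  have "norm (integral {0..2*pi} (\<lambda>\<theta>. w \<theta> * fourier_mode (-k) \<theta>)) \<le> B * (2*pi - 0)"
    by (rule integral_bound) (auto intro!: continuous_intros assms simp: norm_mult)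
  then show ?thesis
    unfolding fc_eq by (simp add: norm_divide field_simps)
qed

lemma fc_bounded: "continuous_on {0..2*pi} w \<Longrightarrow> \<exists>B. \<forall>k. norm (fc w k) \<le> B"
  by (metis compact_Icc continuous_on_compact_bound norm_fc_le)

lemma fc_deriv:
  assumes deriv: "\<And>\<theta>. (w has_vector_derivative w' \<theta>) (at \<theta>)"
    and cont: "continuous_on {0..2*pi} w'" and periodic: "w (2*pi) = w 0"
  shows "fc w' k = \<i> * of_int k * fc w k"
proof -
  let ?e = "fourier_mode (-k)"
  have "continuous_on {0..2*pi} w"
    using deriv by (meson continuous_at_imp_continuous_on has_vector_derivative_continuous)
  then have int: "(\<lambda>\<theta>. w \<theta> * ?e \<theta>) integrable_on {0..2*pi}" "(\<lambda>\<theta>. w' \<theta> * ?e \<theta>) integrable_on {0..2*pi}"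
    by (auto intro!: integrable_continuous_interval continuous_intros cont)
  have "((\<lambda>\<theta>. w \<theta> * (\<i> * of_int (-k) * ?e \<theta>) + w' \<theta> * ?e \<theta>) has_integral
          w (2*pi) * ?e (2*pi) - w 0 * ?e 0) {0..2*pi}"
    by (intro fundamental_theorem_of_calculus has_vector_derivative_mult
          has_vector_derivative_at_within[OF deriv] has_vector_derivative_fourier_mode) auto
  then have "((\<lambda>\<theta>. w' \<theta> * ?e \<theta> - \<i> * of_int k * (w \<theta> * ?e \<theta>)) has_integral 0) {0..2*pi}"
    using periodic unfolding fourier_mode_2pi by (simp add: algebra_simps)
  then have "integral {0..2*pi} (\<lambda>\<theta>. w' \<theta> * ?e \<theta> - \<i> * of_int k * (w \<theta> * ?e \<theta>)) = 0"
    by (rule integral_unique)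
  then have "integral {0..2*pi} (\<lambda>\<theta>. w' \<theta> * ?e \<theta>) - \<i> * of_int k * integral {0..2*pi} (\<lambda>\<theta>. w \<theta> * ?e \<theta>) = 0"
    using int by (simp add: integral_diff integrable_on_mult_right)
  then show ?thesis
    unfolding fc_eq by (simp add: field_simps)
qed

section \<open>Absolutely convergent Fourier series\<close>

definition fourier_series :: "(int \<Rightarrow> complex) \<Rightarrow> real \<Rightarrow> complex" where
  "fourier_series c \<theta> = (\<Sum>\<^sub>\<infinity>k. c k * fourier_mode k \<theta>)"

lemma tendsto_infsum_symmetric_partial_sums:
  fixes f :: "int \<Rightarrow> 'a::{t2_space,topological_comm_monoid_add}"
  assumes "f summable_on UNIV"
  shows "(\<lambda>N. \<Sum>k\<in>{-int N..int N}. f k) \<longlonglongrightarrow> infsum f UNIV"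
proof -
  have "filterlim (\<lambda>N. {-int N..int N}) (finite_subsets_at_top UNIV) sequentially"
    unfolding filterlim_finite_subsets_at_top
  proof (intro allI impI)
    fix X :: "int set" assume "finite X \<and> X \<subseteq> UNIV"
    then obtain M where M: "\<forall>x\<in>X. \<bar>x\<bar> \<le> M"
      using finite_int_iff_bounded_le[of X] by auto
    show "\<forall>\<^sub>F N in sequentially. finite {-int N..int N} \<and> X \<subseteq> {-int N..int N} \<and> {-int N..int N} \<subseteq> UNIV"
      using eventually_ge_at_top[of "nat M"] by eventually_elim (use M in force)
  qed
  from filterlim_compose[OF infsum_tendsto[OF assms] this] show ?thesis
    by (simp add: o_def)
qed

lemma infsum_eq_sum_plus_infsum_Compl:
  fixes f :: "int \<Rightarrow> 'a::banach"
  assumes "f summable_on UNIV" and "finite K"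
  shows "infsum f UNIV = sum f K + infsum f (- K)"
  using infsum_Un_disjoint[of f K "- K"] summable_on_subset_banach[OF assms(1)] assms(2)
  by (simp add: Compl_eq_Diff_UNIV)

lemma norm_fourier_series_minus_partial_sum_le:
  assumes summable: "(\<lambda>k. norm (c k)) summable_on UNIV" and "finite K"
  shows "norm (fourier_series c \<theta> - (\<Sum>k\<in>K. c k * fourier_mode k \<theta>)) \<le> (\<Sum>\<^sub>\<infinity>k\<in>-K. norm (c k))"
proof -
  have abs: "(\<lambda>k. norm (c k * fourier_mode k \<theta>)) summable_on UNIV"
    using summable by (simp add: norm_mult)
  have "fourier_series c \<theta> - (\<Sum>k\<in>K. c k * fourier_mode k \<theta>) = (\<Sum>\<^sub>\<infinity>k\<in>-K. c k * fourier_mode k \<theta>)"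
    unfolding fourier_series_def
    using infsum_eq_sum_plus_infsum_Compl[OF abs_summable_summable[OF abs] \<open>finite K\<close>] by simp
  also have "norm \<dots> \<le> (\<Sum>\<^sub>\<infinity>k\<in>-K. norm (c k * fourier_mode k \<theta>))"
    by (rule norm_infsum_bound) (rule summable_on_subset_banach[OF abs], auto)
  finally show ?thesis
    by (simp add: norm_mult)
qed

lemma uniform_limit_fourier_series:
  assumes summable: "(\<lambda>k. norm (c k)) summable_on UNIV"
  shows "uniform_limit UNIV (\<lambda>N \<theta>. \<Sum>k\<in>{-int N..int N}. c k * fourier_mode k \<theta>) (fourier_series c) sequentially"
proof -
  define tail where "tail N = (\<Sum>\<^sub>\<infinity>k\<in>-{-int N..int N}. norm (c k))" for N
  have "tail = (\<lambda>N. (\<Sum>\<^sub>\<infinity>k. norm (c k)) - (\<Sum>k\<in>{-int N..int N}. norm (c k)))"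
  proof
    fix N
    show "tail N = (\<Sum>\<^sub>\<infinity>k. norm (c k)) - (\<Sum>k\<in>{-int N..int N}. norm (c k))"
      using infsum_eq_sum_plus_infsum_Compl[OF summable, of "{-int N..int N}"] by (simp add: tail_def)
  qed
  moreover have "(\<lambda>N. (\<Sum>\<^sub>\<infinity>k. norm (c k)) - (\<Sum>k\<in>{-int N..int N}. norm (c k))) \<longlonglongrightarrow> 0"
    using tendsto_diff[OF tendsto_const[of "\<Sum>\<^sub>\<infinity>k. norm (c k)"]
        tendsto_infsum_symmetric_partial_sums[OF summable]] by simp
  ultimately have tail: "tail \<longlonglongrightarrow> 0"
    by (simp only:)
  show ?thesis
    unfolding uniform_limit_iff
  proof (intro allI impI)
    fix e :: real assume "e > 0"
    with tail have "\<forall>\<^sub>F N in sequentially. tail N < e"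
      by (auto dest: order_tendstoD)
    then show "\<forall>\<^sub>F N in sequentially. \<forall>\<theta>\<in>UNIV.
        dist (\<Sum>k\<in>{-int N..int N}. c k * fourier_mode k \<theta>) (fourier_series c \<theta>) < e"
    proof eventually_elim
      case (elim N)
      show ?case
      proof
        fix \<theta>
        have "dist (\<Sum>k\<in>{-int N..int N}. c k * fourier_mode k \<theta>) (fourier_series c \<theta>)
            = norm (fourier_series c \<theta> - (\<Sum>k\<in>{-int N..int N}. c k * fourier_mode k \<theta>))"
          by (simp add: dist_norm norm_minus_commute)
        also have "\<dots> \<le> tail N"
          unfolding tail_def by (rule norm_fourier_series_minus_partial_sum_le[OF summable]) simp
        finally show "dist (\<Sum>k\<in>{-int N..int N}. c k * fourier_mode k \<theta>) (fourier_series c \<theta>) < e"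
          using elim by simp
      qed
    qed
  qed
qed

lemma continuous_on_fourier_series:
  assumes "(\<lambda>k. norm (c k)) summable_on UNIV"
  shows "continuous_on S (fourier_series c)"
  by (rule uniform_limit_theorem[OF _ uniform_limit_on_subset[OF uniform_limit_fourier_series[OF assms]]])
     (auto intro!: always_eventually continuous_intros)

lemma norm_fourier_series_le:
  assumes "(\<lambda>k. norm (c k)) summable_on UNIV"
  shows "norm (fourier_series c \<theta>) \<le> (\<Sum>\<^sub>\<infinity>k. norm (c k))"
  using norm_infsum_bound[of "\<lambda>k. c k * fourier_mode k \<theta>" UNIV] assms
  by (simp add: fourier_series_def norm_mult)

lemma integral_fourier_series_mult:
  assumes summable: "(\<lambda>k. norm (c k)) summable_on UNIV" and w: "continuous_on {0..2*pi} w"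
  shows "integral {0..2*pi} (\<lambda>\<theta>. fourier_series c \<theta> * w \<theta>) = 2 * pi * (\<Sum>\<^sub>\<infinity>k. c k * fc w (-k))"
proof -
  define P where "P N \<theta> = (\<Sum>k\<in>{-int N..int N}. c k * fourier_mode k \<theta>)" for N \<theta>
  obtain B where B: "\<And>k. norm (fc w k) \<le> B"
    using fc_bounded[OF w] by blast
  have "(\<lambda>k. norm (c k * fc w (-k))) summable_on UNIV"
    by (rule summable_on_comparison_test[OF summable_on_cmult_left[OF summable, of B]])
       (simp_all add: norm_mult mult_left_mono B)
  then have coeffs: "(\<lambda>k. c k * fc w (-k)) summable_on UNIV"
    by (rule abs_summable_summable)
  have "bounded (fourier_series c ` {0..2*pi})"
    using norm_fourier_series_le[OF summable] by (auto intro!: boundedI)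
  moreover have "bounded (w ` {0..2*pi})"
    by (intro compact_imp_bounded compact_continuous_image w compact_Icc)
  moreover have "uniform_limit {0..2*pi} P (fourier_series c) sequentially"
    unfolding P_def by (rule uniform_limit_on_subset[OF uniform_limit_fourier_series[OF summable]]) simp
  ultimately have ulim: "uniform_limit {0..2*pi} (\<lambda>N \<theta>. P N \<theta> * w \<theta>) (\<lambda>\<theta>. fourier_series c \<theta> * w \<theta>) sequentially"
    by (intro uniform_lim_mult uniform_limit_const)
  have cont: "continuous_on {0..2*pi} (\<lambda>\<theta>. P N \<theta> * w \<theta>)" for N
    unfolding P_def by (intro continuous_intros w)
  obtain I J where I: "\<And>N. ((\<lambda>\<theta>. P N \<theta> * w \<theta>) has_integral I N) {0..2*pi}"
    and J: "((\<lambda>\<theta>. fourier_series c \<theta> * w \<theta>) has_integral J) {0..2*pi}" and "I \<longlonglongrightarrow> J"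
    using uniform_limit_integral[OF ulim cont trivial_limit_sequentially] by blast
  have "I = (\<lambda>N. 2 * pi * (\<Sum>k\<in>{-int N..int N}. c k * fc w (-k)))"
  proof
    fix N
    have "I N = integral {0..2*pi} (\<lambda>\<theta>. \<Sum>k\<in>{-int N..int N}. c k * (fourier_mode k \<theta> * w \<theta>))"
      using integral_unique[OF I[of N]] by (simp add: P_def sum_distrib_right mult.assoc)
    also have "\<dots> = (\<Sum>k\<in>{-int N..int N}. integral {0..2*pi} (\<lambda>\<theta>. c k * (fourier_mode k \<theta> * w \<theta>)))"
      by (rule Henstock_Kurzweil_Integration.integral_sum)
         (simp, intro ballI integrable_continuous_interval continuous_intros w)
    also have "\<dots> = (\<Sum>k\<in>{-int N..int N}. c k * (2 * pi * fc w (-k)))"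
      by (simp only: integral_mult_right integral_fourier_mode_mult)
    finally show "I N = 2 * pi * (\<Sum>k\<in>{-int N..int N}. c k * fc w (-k))"
      by (simp add: sum_distrib_left mult_ac)
  qed
  with \<open>I \<longlonglongrightarrow> J\<close> have "(\<lambda>N. 2 * pi * (\<Sum>k\<in>{-int N..int N}. c k * fc w (-k))) \<longlonglongrightarrow> J"
    by (simp only:)
  moreover have "(\<lambda>N. 2 * pi * (\<Sum>k\<in>{-int N..int N}. c k * fc w (-k))) \<longlonglongrightarrow> 2 * pi * (\<Sum>\<^sub>\<infinity>k. c k * fc w (-k))"
    by (intro tendsto_mult_left tendsto_infsum_symmetric_partial_sums coeffs)
  ultimately show ?thesis
    using integral_unique[OF J] by (simp add: LIMSEQ_unique)
qed

lemma fc_fourier_series: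
  assumes "(\<lambda>k. norm (c k)) summable_on UNIV"
  shows "fc (fourier_series c) m = c m"
proof -
  have mode: "fc (fourier_mode (-m)) (-k) = (if k = m then 1 else 0)" for k
    using fc_fourier_mode[of "-m" "-k"] by simp
  have "continuous_on {0..2*pi} (fourier_mode (-m))"
    by (intro continuous_intros)
  then have "fc (fourier_series c) m = (\<Sum>\<^sub>\<infinity>k. c k * fc (fourier_mode (-m)) (-k))"
    using integral_fourier_series_mult[OF assms] unfolding fc_eq[of "fourier_series c"] by simp
  also have "\<dots> = (\<Sum>\<^sub>\<infinity>k\<in>{m}. c k)"
    unfolding mode by (rule infsum_cong_neutral) auto
  finally show ?thesis
    by simp
qed

lemma summable_inverse_one_plus_square_nat: "summable (\<lambda>n::nat. 1 / (1 + real n ^ 2))"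
proof -
  have "summable (\<lambda>n::nat. inverse (real n ^ 2))"
    by (rule inverse_power_summable) simp
  then have "summable (\<lambda>n::nat. inverse (real (Suc n) ^ 2))"
    using summable_Suc_iff[of "\<lambda>n. inverse (real n ^ 2)"] by blast
  moreover have "norm (1 / (1 + real (Suc n) ^ 2)) \<le> inverse (real (Suc n) ^ 2)" for n
  proof -
    have "0 < real (Suc n) ^ 2"
      by simp
    then show ?thesis
      by (simp add: inverse_eq_divide frac_le)
  qed
  ultimately have "summable (\<lambda>n::nat. 1 / (1 + real (Suc n) ^ 2))"
    by (rule summable_comparison_test'[where N = 0])
  then show ?thesis
    using summable_Suc_iff[of "\<lambda>n. 1 / (1 + real n ^ 2)"] by blast
qed

lemma summable_on_inverse_one_plus_square_int:
  "(\<lambda>k::int. 1 / (1 + real_of_int k ^ 2)) summable_on UNIV"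
proof -
  let ?f = "\<lambda>k::int. 1 / (1 + real_of_int k ^ 2)"
  have nat: "(\<lambda>n::nat. 1 / (1 + real n ^ 2)) summable_on UNIV"
    using summable_inverse_one_plus_square_nat summable_on_UNIV_nonneg_real_iff by simp
  have "?f summable_on range int" and "?f summable_on range (\<lambda>n. - int n)"
    by (subst summable_on_reindex; use nat in \<open>simp add: o_def inj_def\<close>)+
  moreover have "UNIV = range int \<union> range (\<lambda>n. - int n)"
  proof -
    have "k \<in> range int \<union> range (\<lambda>n. - int n)" for k
      by (cases "k \<ge> 0") (auto intro: image_eqI[of k int "nat k"] image_eqI[of k _ "nat (- k)"])
    then show ?thesis
      by blast
  qed
  ultimately show ?thesis
    using summable_on_union by metis
qed

lemma summable_on_of_decay:
  fixes a :: "int \<Rightarrow> complex"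
  assumes "\<And>k. \<bar>real_of_int k\<bar> ^ p * norm (a k) \<le> B1"
    and "\<And>k. \<bar>real_of_int k\<bar> ^ (p + 2) * norm (a k) \<le> B2"
  shows "(\<lambda>k. \<bar>real_of_int k\<bar> ^ p * norm (a k)) summable_on UNIV"
proof (rule summable_on_comparison_test)
  show "(\<lambda>k::int. (B1 + B2) * (1 / (1 + real_of_int k ^ 2))) summable_on UNIV"
    by (rule summable_on_cmult_right[OF summable_on_inverse_one_plus_square_int])
  fix k :: int
  have "(1 + real_of_int k ^ 2) * (\<bar>real_of_int k\<bar> ^ p * norm (a k))
      = \<bar>real_of_int k\<bar> ^ p * norm (a k) + \<bar>real_of_int k\<bar> ^ (p + 2) * norm (a k)"
    by (simp add: algebra_simps power_add power2_eq_square)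
  also have "\<dots> \<le> B1 + B2"
    using assms[of k] by simp
  finally show "\<bar>real_of_int k\<bar> ^ p * norm (a k) \<le> (B1 + B2) * (1 / (1 + real_of_int k ^ 2))"
    by (simp add: field_simps add_pos_nonneg)
qed simp

section \<open>Uniqueness of Fourier coefficients\<close>

definition trig_poly :: "(complex \<times> int) list \<Rightarrow> real \<Rightarrow> complex" where
  "trig_poly xs \<theta> = (\<Sum>(c, k)\<leftarrow>xs. c * fourier_mode k \<theta>)"

lemma trig_poly_Nil [simp]: "trig_poly [] \<theta> = 0"
  by (simp add: trig_poly_def)

lemma trig_poly_Cons [simp]: "trig_poly ((c, k) # xs) \<theta> = c * fourier_mode k \<theta> + trig_poly xs \<theta>"
  by (simp add: trig_poly_def)

lemma trig_poly_append [simp]: "trig_poly (xs @ ys) \<theta> = trig_poly xs \<theta> + trig_poly ys \<theta>"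
  by (simp add: trig_poly_def)

lemma continuous_on_trig_poly [continuous_intros]: "continuous_on S (trig_poly xs)"
  by (induction xs) (auto intro!: continuous_intros)

definition trig_poly_times :: "(complex \<times> int) list \<Rightarrow> (complex \<times> int) list \<Rightarrow> (complex \<times> int) list" where
  "trig_poly_times xs ys = concat (map (\<lambda>(c, k). map (\<lambda>(d, l). (c * d, k + l)) ys) xs)"

lemma trig_poly_trig_poly_times: "trig_poly (trig_poly_times xs ys) \<theta> = trig_poly xs \<theta> * trig_poly ys \<theta>"
proof (induction xs)
  case Nil
  then show ?case
    by (simp add: trig_poly_times_def)
next
  case (Cons x xs)
  obtain c k where x: "x = (c, k)"
    by (cases x)
  have shift: "trig_poly (map (\<lambda>(d, l). (c * d, k + l)) ys) \<theta> = c * fourier_mode k \<theta> * trig_poly ys \<theta>"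
  proof (induction ys)
    case (Cons y ys)
    obtain d l where y: "y = (d, l)"
      by (cases y)
    have "fourier_mode (k + l) \<theta> = fourier_mode k \<theta> * fourier_mode l \<theta>"
      by (simp only: fourier_mode_add)
    then show ?case
      using Cons by (simp add: y algebra_simps)
  qed simp
  have "trig_poly_times (x # xs) ys = map (\<lambda>(d, l). (c * d, k + l)) ys @ trig_poly_times xs ys"
    by (simp add: trig_poly_times_def x)
  then show ?case
    using Cons by (simp only: trig_poly_append shift) (simp add: x algebra_simps)
qed

lemma real_polynomial_function_cis_eq_trig_poly:
  assumes "real_polynomial_function g"
  shows "\<exists>xs. \<forall>\<theta>. complex_of_real (g (cis \<theta>)) = trig_poly xs \<theta>"
  using assms
proof (induction rule: real_polynomial_function.induct)
  case (linear f)
  interpret bounded_linear f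
    by fact
  have "cis \<theta> = cos \<theta> *\<^sub>R 1 + sin \<theta> *\<^sub>R \<i>" for \<theta>
    by (simp add: cis.ctr complex_eq_iff)
  then have f_cis: "f (cis \<theta>) = cos \<theta> * f 1 + sin \<theta> * f \<i>" for \<theta>
    by (simp add: add scale)
  have "complex_of_real (f (cis \<theta>))
      = trig_poly [(f 1 / 2 - \<i> * f \<i> / 2, 1), (f 1 / 2 + \<i> * f \<i> / 2, -1)] \<theta>" for \<theta>
  proof -
    have cos_eq: "complex_of_real (cos \<theta>) = (fourier_mode 1 \<theta> + fourier_mode (-1) \<theta>) / 2"
      and sin_eq: "complex_of_real (sin \<theta>) = (fourier_mode 1 \<theta> - fourier_mode (-1) \<theta>) / (2 * \<i>)"
      by (simp_all add: cos_of_real[symmetric] cos_exp_eq sin_of_real[symmetric] sin_exp_eq)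
    show ?thesis
      unfolding f_cis by (simp add: cos_eq sin_eq field_simps)
  qed
  then show ?case
    by blast
next
  case (const c)
  have "complex_of_real c = trig_poly [(of_real c, 0)] \<theta>" for \<theta>
    by simp
  then show ?case
    by blast
next
  case (add f g)
  then obtain xs ys where "\<forall>\<theta>. complex_of_real (f (cis \<theta>)) = trig_poly xs \<theta>"
    and "\<forall>\<theta>. complex_of_real (g (cis \<theta>)) = trig_poly ys \<theta>"
    by blast
  then have "\<forall>\<theta>. complex_of_real (f (cis \<theta>) + g (cis \<theta>)) = trig_poly (xs @ ys) \<theta>"
    by simp
  then show ?case
    by blast
next
  case (mult f g)
  then obtain xs ys where "\<forall>\<theta>. complex_of_real (f (cis \<theta>)) = trig_poly xs \<theta>"
    and "\<forall>\<theta>. complex_of_real (g (cis \<theta>)) = trig_poly ys \<theta>"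
    by blast
  then have "\<forall>\<theta>. complex_of_real (f (cis \<theta>) * g (cis \<theta>)) = trig_poly (trig_poly_times xs ys) \<theta>"
    by (simp add: trig_poly_trig_poly_times)
  then show ?case
    by blast
qed

lemma integral_mult_trig_poly_eq_0:
  assumes cont: "continuous_on {0..2*pi} w" and fc_0: "\<And>k. fc w k = 0"
  shows "integral {0..2*pi} (\<lambda>\<theta>. w \<theta> * trig_poly xs \<theta>) = 0"
proof (induction xs)
  case (Cons x xs)
  obtain c k where x: "x = (c, k)"
    by (cases x)
  have "(\<lambda>\<theta>. w \<theta> * trig_poly (x # xs) \<theta>) = (\<lambda>\<theta>. c * (fourier_mode k \<theta> * w \<theta>) + w \<theta> * trig_poly xs \<theta>)"
    by (auto simp: x algebra_simps)
  moreover have "(\<lambda>\<theta>. c * (fourier_mode k \<theta> * w \<theta>)) integrable_on {0..2*pi}"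
    and "(\<lambda>\<theta>. w \<theta> * trig_poly xs \<theta>) integrable_on {0..2*pi}"
    by (auto intro!: integrable_continuous_interval continuous_intros cont)
  ultimately have "integral {0..2*pi} (\<lambda>\<theta>. w \<theta> * trig_poly (x # xs) \<theta>)
      = c * integral {0..2*pi} (\<lambda>\<theta>. fourier_mode k \<theta> * w \<theta>) + integral {0..2*pi} (\<lambda>\<theta>. w \<theta> * trig_poly xs \<theta>)"
    by (simp add: integral_add)
  then show ?case
    using Cons unfolding integral_fourier_mode_mult fc_0 by simp
qed simp

lemma periodic_shift_int:
  assumes periodic: "\<And>\<theta>. v (\<theta> + 2 * pi) = v \<theta>"
  shows "v (\<theta> + 2 * pi * of_int n) = v \<theta>"
proof (induction n rule: int_induct[where k = 0])
  case (step1 i)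
  then show ?case
    using periodic[of "\<theta> + 2 * pi * of_int i"] by (simp add: algebra_simps)
next
  case (step2 i)
  then show ?case
    using periodic[of "\<theta> + 2 * pi * of_int (i - 1)"] by (simp add: algebra_simps)
qed simp

lemma periodic_Arg2pi_eq_Arg:
  assumes periodic: "\<And>\<theta>. v (\<theta> + 2 * pi) = v \<theta>" and "z \<noteq> 0"
  shows "v (Arg2pi z) = v (Arg z)"
proof -
  have z: "z = of_real (norm z) * exp (\<i> * of_real (Arg z))" and "0 < norm z"
    using Arg_eq[of z] \<open>z \<noteq> 0\<close> by simp_all
  show ?thesis
  proof (cases "Arg z \<ge> 0")
    case True
    then have "Arg2pi z = Arg z"
      using Arg2pi_unique[OF z[symmetric] \<open>0 < norm z\<close>] Arg_le_pi[of z] pi_gt_zero by linarith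
    then show ?thesis
      by simp
  next
    case False
    have "exp (\<i> * of_real (Arg z + 2 * pi)) = exp (\<i> * of_real (Arg z) + \<i> * (of_int 1 * (of_real pi * 2)))"
      by (simp add: algebra_simps)
    also have "\<dots> = exp (\<i> * of_real (Arg z))"
      by (rule exp_plus_2pin)
    finally have "Arg2pi z = Arg z + 2 * pi"
      using Arg2pi_unique[of "norm z" "Arg z + 2 * pi" z] z \<open>0 < norm z\<close> False mpi_less_Arg[of z] by auto
    then show ?thesis
      using periodic by simp
  qed
qed

lemma continuous_on_sphere_periodic_Arg2pi:
  assumes cont: "continuous_on UNIV v" and periodic: "\<And>\<theta>. v (\<theta> + 2 * pi) = v \<theta>"
  shows "continuous_on (sphere 0 1) (\<lambda>z. v (Arg2pi z))"
proof (rule continuous_at_imp_continuous_on, intro ballI)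
  fix z :: complex
  assume "z \<in> sphere 0 1"
  then have "z \<noteq> 0"
    by auto
  have isCont_v: "isCont v x" for x
    using cont by (simp add: continuous_on_eq_continuous_at)
  show "isCont (\<lambda>z. v (Arg2pi z)) z"
  proof (cases "z \<in> \<real>\<^sub>\<ge>\<^sub>0")
    case False
    then show ?thesis
      using continuous_at_compose[OF continuous_at_Arg2pi[OF False] isCont_v] by (simp add: o_def)
  next
    case True
    \<comment> \<open>Near the positive real axis, where \<open>Arg2pi\<close> jumps, compare with \<open>Arg\<close>.\<close>
    then have "z \<notin> \<real>\<^sub>\<le>\<^sub>0"
      using \<open>z \<noteq> 0\<close> by (auto simp: complex_nonneg_Reals_iff complex_nonpos_Reals_iff complex_eq_iff)
    then have "isCont (\<lambda>z. v (Arg z)) z"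
      using continuous_at_compose[OF continuous_at_Arg isCont_v] by (simp add: o_def)
    moreover have "\<forall>\<^sub>F x in nhds z. x \<in> - {0}"
      by (rule eventually_nhds_in_open) (use \<open>z \<noteq> 0\<close> in auto)
    then have "\<forall>\<^sub>F x in nhds z. v (Arg2pi x) = v (Arg x)"
      by eventually_elim (use periodic_Arg2pi_eq_Arg[of v, OF periodic] in auto)
    ultimately show ?thesis
      using isCont_cong[of "\<lambda>x. v (Arg2pi x)" "\<lambda>x. v (Arg x)" z] by simp
  qed
qed

lemma periodic_Arg2pi_cis:
  assumes periodic: "\<And>\<theta>. v (\<theta> + 2 * pi) = v \<theta>" and "\<theta> \<in> {0..2*pi}"
  shows "v (Arg2pi (cis \<theta>)) = v \<theta>"
proof (cases "\<theta> = 2 * pi")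
  case True
  then show ?thesis
    using periodic[of 0] Arg2pi_of_real[of 1] by simp
next
  case False
  then have "Arg2pi (cis \<theta>) = \<theta>"
    using assms(2) by (intro Arg2pi_unique[of 1]) (auto simp: cis_conv_exp)
  then show ?thesis
    by simp
qed

text \<open>Orthogonality to all trigonometric polynomials, which are dense by Stone--Weierstrass on the circle.\<close>
lemma integral_square_eq_0_if_fc_eq_0:
  fixes v :: "real \<Rightarrow> real"
  assumes cont: "continuous_on UNIV v" and periodic: "\<And>\<theta>. v (\<theta> + 2 * pi) = v \<theta>"
    and fc_0: "\<And>k. fc (\<lambda>\<theta>. complex_of_real (v \<theta>)) k = 0"
  shows "integral {0..2*pi} (\<lambda>\<theta>. v \<theta> * v \<theta>) = 0"
proof -
  define w where "w \<theta> = complex_of_real (v \<theta>)" for \<theta>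
  have cont_w: "continuous_on {0..2*pi} w"
    unfolding w_def by (intro continuous_intros continuous_on_subset[OF cont]) simp
  obtain B where B: "B \<ge> 0" "\<And>\<theta>. \<theta> \<in> {0..2*pi} \<Longrightarrow> norm (w \<theta>) \<le> B"
    using continuous_on_compact_bound[OF compact_Icc cont_w] by blast
  let ?J = "integral {0..2*pi} (\<lambda>\<theta>. w \<theta> * w \<theta>)"
  have approx: "norm ?J \<le> B * e * (2 * pi)" if "e > 0" for e
  proof -
    obtain g where g: "real_polynomial_function g"
      and close: "\<And>z. z \<in> sphere 0 1 \<Longrightarrow> \<bar>v (Arg2pi z) - g z\<bar> < e"
      using Stone_Weierstrass_real_polynomial_function[OF compact_sphere
          continuous_on_sphere_periodic_Arg2pi[OF cont periodic] \<open>e > 0\<close>] by blast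
    obtain xs where xs: "\<And>\<theta>. complex_of_real (g (cis \<theta>)) = trig_poly xs \<theta>"
      using real_polynomial_function_cis_eq_trig_poly[OF g] by blast
    have "?J = ?J - integral {0..2*pi} (\<lambda>\<theta>. w \<theta> * trig_poly xs \<theta>)"
      using integral_mult_trig_poly_eq_0[OF cont_w fc_0[folded w_def]] by simp
    also have "\<dots> = integral {0..2*pi} (\<lambda>\<theta>. w \<theta> * (w \<theta> - trig_poly xs \<theta>))"
      by (subst integral_diff[symmetric])
         (auto intro!: integrable_continuous_interval continuous_intros cont_w simp: right_diff_distrib)
    also have "norm \<dots> \<le> B * e * (2 * pi - 0)"
    proof (rule integral_bound)
      fix \<theta> assume \<theta>: "\<theta> \<in> {0..2*pi}"
      have "w \<theta> - trig_poly xs \<theta> = complex_of_real (v (Arg2pi (cis \<theta>)) - g (cis \<theta>))"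
        using periodic_Arg2pi_cis[of v, OF periodic \<theta>] xs[of \<theta>] by (simp add: w_def)
      then have "norm (w \<theta> - trig_poly xs \<theta>) \<le> e"
        using close[of "cis \<theta>"] by (metis norm_of_real less_imp_le mem_sphere_0 norm_cis)
      then show "norm (w \<theta> * (w \<theta> - trig_poly xs \<theta>)) \<le> B * e"
        unfolding norm_mult using B \<theta> by (intro mult_mono) auto
    qed (auto intro!: continuous_intros cont_w)
    finally show ?thesis
      by simp
  qed
  have "norm ?J \<le> 0 + e" if "e > 0" for e
  proof -
    have "norm ?J \<le> B * (e / ((B + 1) * (2 * pi))) * (2 * pi)"
      using that B(1) by (intro approx) simp
    also have "\<dots> = e * (B / (B + 1))"
      using B(1) by (simp add: divide_simps)
    also have "\<dots> \<le> e"
      using that B(1) by (intro mult_left_le) simp_all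
    finally show ?thesis
      by simp
  qed
  then have "?J = 0"
    using field_le_epsilon[of "norm ?J" 0] by simp
  moreover have "((\<lambda>\<theta>. v \<theta> * v \<theta>) has_integral integral {0..2*pi} (\<lambda>\<theta>. v \<theta> * v \<theta>)) {0..2*pi}"
    by (intro integrable_integral integrable_continuous_interval continuous_intros continuous_on_subset[OF cont])
       simp_all
  from has_integral_of_real[OF this, where 'b = complex]
  have "?J = complex_of_real (integral {0..2*pi} (\<lambda>\<theta>. v \<theta> * v \<theta>))"
    unfolding w_def by (simp add: integral_unique)
  ultimately show ?thesis
    by simp
qed

lemma eq_0_if_fc_eq_0:
  fixes v :: "real \<Rightarrow> real"
  assumes cont: "continuous_on UNIV v" and periodic: "\<And>\<theta>. v (\<theta> + 2 * pi) = v \<theta>"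
    and fc_0: "\<And>k. fc (\<lambda>\<theta>. complex_of_real (v \<theta>)) k = 0"
  shows "v \<theta> = 0"
proof -
  have "continuous_on {0..2*pi} (\<lambda>\<theta>. v \<theta> * v \<theta>)"
    by (intro continuous_intros continuous_on_subset[OF cont]) simp_all
  then have zero: "v x = 0" if "x \<in> {0..2*pi}" for x
    using integral_eq_0_iff integral_square_eq_0_if_fc_eq_0[OF cont periodic fc_0] that by force
  define n where "n = \<lfloor>\<theta> / (2 * pi)\<rfloor>"
  have "of_int n \<le> \<theta> / (2 * pi)" "\<theta> / (2 * pi) < of_int n + 1"
    unfolding n_def by linarith+
  then have "2 * pi * of_int n \<le> \<theta>" "\<theta> < 2 * pi * of_int n + 2 * pi"
    by (simp_all add: field_simps)
  then have "\<theta> - 2 * pi * of_int n \<in> {0..2*pi}"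
    by simp
  with zero show ?thesis
    using periodic_shift_int[of v, OF periodic, of "\<theta> - 2 * pi * of_int n" n] by simp
qed

section \<open>Periodic functions with three continuous derivatives\<close>

lemma fc_deriv_of_real:
  assumes deriv: "\<And>\<theta>. (f has_real_derivative f' \<theta>) (at \<theta>)" and cont: "continuous_on UNIV f'"
    and periodic: "\<And>\<theta>. f (\<theta> + 2 * pi) = f \<theta>"
  shows "fc (\<lambda>\<theta>. complex_of_real (f' \<theta>)) k = \<i> * of_int k * fc (\<lambda>\<theta>. complex_of_real (f \<theta>)) k"
  using periodic[of 0]
  by (intro fc_deriv has_vector_derivative_of_real deriv continuous_intros continuous_on_subset[OF cont]) auto

lemma periodic_deriv:
  assumes deriv: "\<And>\<theta>. (f has_real_derivative f' \<theta>) (at \<theta>)" and periodic: "\<And>\<theta>. f (\<theta> + 2 * pi) = f \<theta>"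
  shows "f' (\<theta> + 2 * pi) = f' \<theta>"
proof -
  have "((\<lambda>\<theta>. f (\<theta> + 2 * pi)) has_real_derivative f' (\<theta> + 2 * pi)) (at \<theta>)"
    using deriv[of "\<theta> + 2 * pi"] DERIV_shift by blast
  then have "(f has_real_derivative f' (\<theta> + 2 * pi)) (at \<theta>)"
    by (simp add: periodic)
  then show ?thesis
    using deriv[of \<theta>] DERIV_unique by blast
qed

lemma Lam_eq_fourier_series: "Lam w = fourier_series (\<lambda>k. of_int \<bar>k\<bar> * fc w k)"
  by (simp add: Lam_def fourier_series_def fun_eq_iff)

lemma Hil_eq_fourier_series: "Hil w = fourier_series (\<lambda>k. of_int (sgn k) * fc w k)"
  by (simp add: Hil_def fourier_series_def fun_eq_iff)

definition dirichlet_energy :: "(int \<Rightarrow> complex) \<Rightarrow> real" where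
  "dirichlet_energy c = (\<Sum>\<^sub>\<infinity>k. \<bar>real_of_int k\<bar> * (norm (c k))\<^sup>2)"

lemma summable_on_dirichlet_energy:
  assumes summable: "(\<lambda>k. \<bar>real_of_int k\<bar> * norm (c k)) summable_on UNIV"
    and bound: "\<And>k. norm (c k) \<le> B"
  shows "(\<lambda>k. \<bar>real_of_int k\<bar> * (norm (c k))\<^sup>2) summable_on UNIV"
proof (rule summable_on_comparison_test[OF summable_on_cmult_right[OF summable, of B]])
  show "\<bar>real_of_int k\<bar> * (norm (c k))\<^sup>2 \<le> B * (\<bar>real_of_int k\<bar> * norm (c k))" for k
    using mult_left_mono[OF bound[of k], of "\<bar>real_of_int k\<bar> * norm (c k)"]
    by (simp add: power2_eq_square mult_ac)
qed simp

lemma dirichlet_energy_nonneg: "dirichlet_energy c \<ge> 0"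
  unfolding dirichlet_energy_def by (rule infsum_nonneg) simp

lemma of_real_dirichlet_energy:
  assumes "(\<lambda>k. \<bar>real_of_int k\<bar> * (norm (c k))\<^sup>2) summable_on UNIV"
  shows "complex_of_real (dirichlet_energy c) = (\<Sum>\<^sub>\<infinity>k. of_int \<bar>k\<bar> * (c k * cnj (c k)))"
proof -
  have "(\<Sum>\<^sub>\<infinity>k. of_int \<bar>k\<bar> * (c k * cnj (c k))) = (\<Sum>\<^sub>\<infinity>k. complex_of_real (\<bar>real_of_int k\<bar> * (norm (c k))\<^sup>2))"
    by (intro infsum_cong) (simp flip: complex_norm_square of_int_abs)
  also have "\<dots> = complex_of_real (dirichlet_energy c)"
    unfolding dirichlet_energy_def using has_sum_of_real[OF has_sum_infsum[OF assms]] infsumI by blast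
  finally show ?thesis
    by simp
qed

text \<open>Three continuous derivatives give enough decay of the Fourier coefficients for absolute
  convergence of the series of \<open>Lam U\<close> and \<open>Hil U\<close>.\<close>
locale periodic_C3 =
  fixes u u' u'' u''' :: "real \<Rightarrow> real"
  assumes has_derivative_u: "\<And>\<theta>. (u has_real_derivative u' \<theta>) (at \<theta>)"
    and has_derivative_u': "\<And>\<theta>. (u' has_real_derivative u'' \<theta>) (at \<theta>)"
    and has_derivative_u'': "\<And>\<theta>. (u'' has_real_derivative u''' \<theta>) (at \<theta>)"
    and continuous_u''': "continuous_on UNIV u'''"
    and periodic_u: "\<And>\<theta>. u (\<theta> + 2 * pi) = u \<theta>"
begin

abbreviation U :: "real \<Rightarrow> complex" where
  "U \<equiv> \<lambda>\<theta>. complex_of_real (u \<theta>)"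

lemma continuous_u: "continuous_on S u"
  and continuous_u': "continuous_on S u'"
  and continuous_u'': "continuous_on S u''"
  using has_derivative_u has_derivative_u' has_derivative_u''
  by (meson DERIV_continuous continuous_at_imp_continuous_on)+

lemma periodic_u': "u' (\<theta> + 2 * pi) = u' \<theta>"
  by (rule periodic_deriv[OF has_derivative_u periodic_u])

lemma periodic_u'': "u'' (\<theta> + 2 * pi) = u'' \<theta>"
  by (rule periodic_deriv[OF has_derivative_u' periodic_u'])

lemma fc_u': "fc (\<lambda>\<theta>. complex_of_real (u' \<theta>)) k = \<i> * of_int k * fc U k"
  by (rule fc_deriv_of_real[OF has_derivative_u continuous_u' periodic_u])

lemma norm_fc_u'': "norm (fc (\<lambda>\<theta>. complex_of_real (u'' \<theta>)) k) = \<bar>real_of_int k\<bar> ^ 2 * norm (fc U k)"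
  by (simp add: fc_deriv_of_real[OF has_derivative_u' continuous_u'' periodic_u'] fc_u'
      norm_mult power2_eq_square)

lemma norm_fc_u''': "norm (fc (\<lambda>\<theta>. complex_of_real (u''' \<theta>)) k) = \<bar>real_of_int k\<bar> ^ 3 * norm (fc U k)"
  by (simp add: fc_deriv_of_real[OF has_derivative_u'' continuous_u''' periodic_u''] norm_fc_u''
      norm_mult power3_eq_cube power2_eq_square)

lemma fc_U_bounded: "\<exists>B. \<forall>k. norm (fc U k) \<le> B"
  by (intro fc_bounded continuous_intros continuous_u)

lemma summable_norm_fc_U: "(\<lambda>k. norm (fc U k)) summable_on UNIV"
proof -
  obtain B0 where B0: "\<And>k. \<bar>real_of_int k\<bar> ^ 0 * norm (fc U k) \<le> B0"
    using fc_U_bounded by auto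
  have "\<exists>B. \<forall>k. norm (fc (\<lambda>\<theta>. complex_of_real (u'' \<theta>)) k) \<le> B"
    by (intro fc_bounded continuous_intros continuous_u'')
  then obtain B2 where B2: "\<And>k. \<bar>real_of_int k\<bar> ^ (0 + 2) * norm (fc U k) \<le> B2"
    unfolding norm_fc_u'' add_0 by blast
  show ?thesis
    using summable_on_of_decay[OF B0 B2] by simp
qed

lemma summable_abs_mult_norm_fc_U: "(\<lambda>k. \<bar>real_of_int k\<bar> * norm (fc U k)) summable_on UNIV"
proof -
  have "\<exists>B. \<forall>k. norm (fc (\<lambda>\<theta>. complex_of_real (u' \<theta>)) k) \<le> B"
    by (intro fc_bounded continuous_intros continuous_u')
  then obtain B1 where B1: "\<And>k. \<bar>real_of_int k\<bar> ^ 1 * norm (fc U k) \<le> B1"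
    unfolding fc_u' by (auto simp: norm_mult)
  have "\<exists>B. \<forall>k. norm (fc (\<lambda>\<theta>. complex_of_real (u''' \<theta>)) k) \<le> B"
    by (intro fc_bounded continuous_intros continuous_on_subset[OF continuous_u''']) simp
  moreover have "(1::nat) + 2 = 3"
    by simp
  ultimately obtain B3 where B3: "\<And>k. \<bar>real_of_int k\<bar> ^ (1 + 2) * norm (fc U k) \<le> B3"
    unfolding norm_fc_u''' by metis
  show ?thesis
    using summable_on_of_decay[OF B1 B3] by simp
qed

lemma fc_U_uminus: "fc U (-k) = cnj (fc U k)"
  by (rule fc_of_real_uminus)

lemma summable_on_dirichlet_energy_fc_U:
  "(\<lambda>k. \<bar>real_of_int k\<bar> * (norm (fc U k))\<^sup>2) summable_on UNIV"
  using fc_U_bounded summable_on_dirichlet_energy[OF summable_abs_mult_norm_fc_U] by blast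

lemma summable_norm_abs_mult_fc_U: "(\<lambda>k. norm (of_int \<bar>k\<bar> * fc U k)) summable_on UNIV"
  using summable_abs_mult_norm_fc_U by (simp add: norm_mult)

lemma summable_norm_sgn_mult_fc_U: "(\<lambda>k. norm (of_int (sgn k) * fc U k)) summable_on UNIV"
  by (rule summable_on_comparison_test[OF summable_norm_fc_U]) (simp_all add: norm_mult sgn_if)

lemma Dop_U: "Dop U = (\<lambda>\<theta>. - \<i> * complex_of_real (u' \<theta>))"
proof -
  have "(U has_vector_derivative complex_of_real (u' \<theta>)) (at \<theta>)" for \<theta>
    by (rule has_vector_derivative_of_real[OF has_derivative_u])
  then show ?thesis
    by (simp add: Dop_def vector_derivative_at fun_eq_iff)
qed

lemma continuous_on_Lam_U: "continuous_on S (Lam U)"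
  unfolding Lam_eq_fourier_series by (rule continuous_on_fourier_series[OF summable_norm_abs_mult_fc_U])

lemma continuous_on_Hil_U: "continuous_on S (Hil U)"
  unfolding Hil_eq_fourier_series by (rule continuous_on_fourier_series[OF summable_norm_sgn_mult_fc_U])

lemma continuous_on_Dop_U: "continuous_on S (Dop U)"
  unfolding Dop_U by (intro continuous_intros continuous_u')

lemma integral_Lam_mult:
  "integral {0..2*pi} (\<lambda>\<theta>. Lam U \<theta> * U \<theta>) = complex_of_real (2 * pi * dirichlet_energy (fc U))"
proof -
  have "continuous_on {0..2*pi} U"
    by (intro continuous_intros continuous_u)
  then have "integral {0..2*pi} (\<lambda>\<theta>. Lam U \<theta> * U \<theta>)
      = complex_of_real (2 * pi) * (\<Sum>\<^sub>\<infinity>k. of_int \<bar>k\<bar> * fc U k * fc U (-k))"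
    unfolding Lam_eq_fourier_series by (rule integral_fourier_series_mult[OF summable_norm_abs_mult_fc_U])
  also have "\<dots> = complex_of_real (2 * pi * dirichlet_energy (fc U))"
    unfolding of_real_mult of_real_dirichlet_energy[OF summable_on_dirichlet_energy_fc_U]
    by (simp add: fc_U_uminus mult.assoc)
  finally show ?thesis .
qed

lemma integral_Hil_mult_Dop:
  "integral {0..2*pi} (\<lambda>\<theta>. Hil U \<theta> * Dop U \<theta>) = - complex_of_real (2 * pi * dirichlet_energy (fc U))"
proof -
  have fc_Dop: "fc (Dop U) k = of_int k * fc U k" for k
  proof -
    have "fc (Dop U) k = - \<i> * fc (\<lambda>\<theta>. complex_of_real (u' \<theta>)) k"
      unfolding Dop_U by (rule fc_cmult)
    then show ?thesis
      unfolding fc_u' mult.assoc complex_i_mult_minus by simp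
  qed
  have sgn: "of_int (sgn k) * fc U k * (of_int (- k) * fc U (- k)) = - (of_int \<bar>k\<bar> * (fc U k * cnj (fc U k)))"
    for k :: int
    by (simp add: fc_U_uminus abs_sgn algebra_simps flip: of_int_mult)
  have "integral {0..2*pi} (\<lambda>\<theta>. Hil U \<theta> * Dop U \<theta>)
      = complex_of_real (2 * pi) * (\<Sum>\<^sub>\<infinity>k. of_int (sgn k) * fc U k * fc (Dop U) (-k))"
    unfolding Hil_eq_fourier_series
    by (rule integral_fourier_series_mult[OF summable_norm_sgn_mult_fc_U continuous_on_Dop_U])
  also have "\<dots> = - complex_of_real (2 * pi * dirichlet_energy (fc U))"
    unfolding fc_Dop sgn infsum_uminus of_real_mult of_real_dirichlet_energy[OF summable_on_dirichlet_energy_fc_U]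
    by simp
  finally show ?thesis .
qed

definition pos_coeff :: "int \<Rightarrow> complex" where
  "pos_coeff k = (if k = 0 then fc U 0 / 2 else if k \<ge> 1 then fc U k else 0)"

lemma norm_pos_coeff_le: "norm (pos_coeff k) \<le> norm (fc U k)"
  by (simp add: pos_coeff_def norm_divide)

lemma summable_norm_pos_coeff: "(\<lambda>k. norm (pos_coeff k)) summable_on UNIV"
  by (rule summable_on_comparison_test[OF summable_norm_fc_U]) (simp_all add: norm_pos_coeff_le)

lemma summable_norm_abs_mult_pos_coeff: "(\<lambda>k. norm (of_int \<bar>k\<bar> * pos_coeff k)) summable_on UNIV"
  by (rule summable_on_comparison_test[OF summable_abs_mult_norm_fc_U])
     (simp_all add: norm_mult mult_left_mono norm_pos_coeff_le)

lemma pos_part_eq_fourier_series: "pos_part U = fourier_series pos_coeff"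
proof
  fix \<theta>
  have "(\<lambda>k. pos_coeff k * fourier_mode k \<theta>) summable_on UNIV"
    by (rule abs_summable_summable) (simp add: norm_mult summable_norm_pos_coeff)
  then have "fourier_series pos_coeff \<theta> = pos_coeff 0 + (\<Sum>\<^sub>\<infinity>k\<in>-{0}. pos_coeff k * fourier_mode k \<theta>)"
    unfolding fourier_series_def by (subst infsum_eq_sum_plus_infsum_Compl[of _ "{0}"]) simp_all
  also have "(\<Sum>\<^sub>\<infinity>k\<in>-{0}. pos_coeff k * fourier_mode k \<theta>) = (\<Sum>\<^sub>\<infinity>k\<in>{1..}. fc U k * fourier_mode k \<theta>)"
    by (rule infsum_cong_neutral) (auto simp: pos_coeff_def)
  finally show "pos_part U \<theta> = fourier_series pos_coeff \<theta>"
    by (simp add: pos_part_def pos_coeff_def[of 0])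
qed

lemma fc_pos_part: "fc (pos_part U) k = pos_coeff k"
  unfolding pos_part_eq_fourier_series by (rule fc_fourier_series[OF summable_norm_pos_coeff])

lemma summable_on_dirichlet_energy_pos_coeff:
  "(\<lambda>k. \<bar>real_of_int k\<bar> * (norm (pos_coeff k))\<^sup>2) summable_on UNIV"
proof -
  obtain B where "\<And>k. norm (fc U k) \<le> B"
    using fc_U_bounded by blast
  then have "norm (pos_coeff k) \<le> B" for k
    using norm_pos_coeff_le order_trans by blast
  moreover have "(\<lambda>k. \<bar>real_of_int k\<bar> * norm (pos_coeff k)) summable_on UNIV"
    using summable_norm_abs_mult_pos_coeff by (simp add: norm_mult)
  ultimately show ?thesis
    using summable_on_dirichlet_energy by blast
qed

lemma ip_pos_part_Lam: "ip (pos_part U) (Lam (pos_part U)) = complex_of_real (2 * pi * dirichlet_energy pos_coeff)"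
proof -
  let ?P = "pos_part U"
  have cont: "continuous_on {0..2*pi} (\<lambda>\<theta>. cnj (?P \<theta>))"
    unfolding pos_part_eq_fourier_series
    by (intro continuous_intros continuous_on_fourier_series summable_norm_pos_coeff)
  have "ip ?P (Lam ?P) = cnj (integral {0..2*pi} (\<lambda>\<theta>. Lam ?P \<theta> * cnj (?P \<theta>)))"
    unfolding ip_def Henstock_Kurzweil_Integration.integral_cnj by (simp add: mult.commute)
  also have "integral {0..2*pi} (\<lambda>\<theta>. Lam ?P \<theta> * cnj (?P \<theta>))
      = complex_of_real (2 * pi) * (\<Sum>\<^sub>\<infinity>k. of_int \<bar>k\<bar> * pos_coeff k * fc (\<lambda>\<theta>. cnj (?P \<theta>)) (-k))"
    unfolding Lam_eq_fourier_series fc_pos_part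
    by (rule integral_fourier_series_mult[OF summable_norm_abs_mult_pos_coeff cont])
  also have "\<dots> = complex_of_real (2 * pi * dirichlet_energy pos_coeff)"
    unfolding fc_cnj fc_pos_part of_real_mult of_real_dirichlet_energy[OF summable_on_dirichlet_energy_pos_coeff]
    by (simp add: mult.assoc)
  finally show ?thesis
    by simp
qed

lemma ip_pos_part_Lam_nonneg: "ip (pos_part U) (Lam (pos_part U)) \<in> \<real>\<^sub>\<ge>\<^sub>0"
  using dirichlet_energy_nonneg[of pos_coeff] by (simp add: ip_pos_part_Lam complex_nonneg_Reals_iff)

text \<open>The negative modes of the real function \<open>u\<close> mirror the positive ones.\<close>
lemma dirichlet_energy_fc_U: "dirichlet_energy (fc U) = 2 * dirichlet_energy pos_coeff"
proof -
  let ?q = "\<lambda>k. \<bar>real_of_int k\<bar> * (norm (pos_coeff k))\<^sup>2"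
  have split: "\<bar>real_of_int k\<bar> * (norm (fc U k))\<^sup>2 = ?q k + ?q (-k)" for k
    using fc_U_uminus[of k] fc_U_uminus[of "-k"] by (auto simp: pos_coeff_def)
  have "(\<Sum>\<^sub>\<infinity>k. ?q (-k)) = (\<Sum>\<^sub>\<infinity>k. ?q k)" and "(\<lambda>k. ?q (-k)) summable_on UNIV"
    using infsum_reindex_bij_betw[of uminus UNIV UNIV ?q] summable_on_reindex_bij_betw[of uminus UNIV UNIV ?q]
      summable_on_dirichlet_energy_pos_coeff bij_uminus by auto
  then show ?thesis
    unfolding dirichlet_energy_def split
    by (simp add: infsum_add[OF summable_on_dirichlet_energy_pos_coeff])
qed

lemma integral_flow_rhs:
  "integral {0..2*pi} (\<lambda>\<theta>. - U \<theta> * Lam U \<theta> + Hil U \<theta> * Dop U \<theta>) = - 4 * ip (pos_part U) (Lam (pos_part U))"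
proof -
  have "(\<lambda>\<theta>. Lam U \<theta> * U \<theta>) integrable_on {0..2*pi}" "(\<lambda>\<theta>. Hil U \<theta> * Dop U \<theta>) integrable_on {0..2*pi}"
    by (auto intro!: integrable_continuous_interval continuous_intros continuous_on_Lam_U
        continuous_on_Hil_U continuous_on_Dop_U continuous_u)
  moreover have "(\<lambda>\<theta>. - U \<theta> * Lam U \<theta> + Hil U \<theta> * Dop U \<theta>) = (\<lambda>\<theta>. - (Lam U \<theta> * U \<theta>) + Hil U \<theta> * Dop U \<theta>)"
    by (rule ext) (simp add: mult.commute)
  ultimately have "integral {0..2*pi} (\<lambda>\<theta>. - U \<theta> * Lam U \<theta> + Hil U \<theta> * Dop U \<theta>)
      = - integral {0..2*pi} (\<lambda>\<theta>. Lam U \<theta> * U \<theta>) + integral {0..2*pi} (\<lambda>\<theta>. Hil U \<theta> * Dop U \<theta>)"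
    by (simp add: integral_diff)
  also have "\<dots> = - 4 * ip (pos_part U) (Lam (pos_part U))"
    unfolding integral_Lam_mult integral_Hil_mult_Dop ip_pos_part_Lam dirichlet_energy_fc_U by simp
  finally show ?thesis .
qed

lemma constant_if_ip_pos_part_Lam_eq_0:
  assumes "ip (pos_part U) (Lam (pos_part U)) = 0"
  shows "\<exists>c. \<forall>\<theta>. u \<theta> = c"
proof -
  have "dirichlet_energy (fc U) = 0"
    using assms unfolding ip_pos_part_Lam dirichlet_energy_fc_U by simp
  then have "\<bar>real_of_int k\<bar> * (norm (fc U k))\<^sup>2 = 0" for k
    unfolding dirichlet_energy_def
    by (rule nonneg_infsum_le_0D[OF eq_refl summable_on_dirichlet_energy_fc_U]) simp_all
  then have "fc (\<lambda>\<theta>. complex_of_real (u' \<theta>)) k = 0" for k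
    by (simp add: fc_u')
  then have "u' \<theta> = 0" for \<theta>
    by (rule eq_0_if_fc_eq_0[OF continuous_u' periodic_u'])
  then have "u \<theta> = u 0" for \<theta>
    using has_derivative_u by (metis DERIV_isconst_all)
  then show ?thesis
    by blast
qed

end

section \<open>The flow\<close>

lemma smooth_on_continuous_on: "smooth_on S f \<Longrightarrow> continuous_on S f"
  and smooth_on_differentiable: "smooth_on S f \<Longrightarrow> x \<in> S \<Longrightarrow> f differentiable (at x within S)"
  and smooth_on_frechet_derivative: "smooth_on S f \<Longrightarrow> smooth_on S (\<lambda>x. frechet_derivative f (at x within S) v)"
  by (auto elim: smooth_on.cases)

lemma has_real_derivative_compose_frechet_derivative:
  fixes f :: "'a::real_normed_vector \<Rightarrow> real"
  assumes diff: "f differentiable (at (g t) within S)"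
    and g: "(g has_vector_derivative v) (at t within T)" and sub: "g ` T \<subseteq> S"
  shows "((\<lambda>s. f (g s)) has_real_derivative frechet_derivative f (at (g t) within S) v) (at t within T)"
proof -
  let ?D = "frechet_derivative f (at (g t) within S)"
  have D: "(f has_derivative ?D) (at (g t) within S)"
    using diff frechet_derivative_works by blast
  interpret bounded_linear ?D
    by (rule has_derivative_bounded_linear[OF D])
  have "((\<lambda>s. f (g s)) has_derivative (\<lambda>h. ?D (h *\<^sub>R v))) (at t within T)"
    using g has_derivative_subset[OF D sub] unfolding has_vector_derivative_def
    by (rule has_derivative_in_compose)
  moreover have "(\<lambda>h. ?D (h *\<^sub>R v)) = (*) (?D v)"
    by (simp add: scale fun_eq_iff)
  ultimately show ?thesis
    by (simp add: has_field_derivative_def)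
qed

lemma antimono_if_has_real_derivative_nonpos:
  fixes f :: "real \<Rightarrow> real"
  assumes "is_interval I"
    and deriv: "\<And>x. x \<in> I \<Longrightarrow> (f has_real_derivative f' x) (at x within I)"
    and nonpos: "\<And>x. x \<in> I \<Longrightarrow> at x within I \<noteq> bot \<Longrightarrow> f' x \<le> 0"
    and "s \<in> I" "t \<in> I" "s \<le> t"
  shows "f t \<le> f s"
proof (cases "s = t")
  case False
  with \<open>s \<le> t\<close> have "s < t"
    by simp
  have sub: "{s..t} \<subseteq> I"
    using mem_is_interval_1_I[OF \<open>is_interval I\<close> \<open>s \<in> I\<close> \<open>t \<in> I\<close>] by auto
  have "(f has_derivative (\<lambda>h. f' x * h)) (at x within {s..t})" if "s \<le> x" "x \<le> t" for x
  proof -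
    have "(f has_derivative (\<lambda>h. f' x * h)) (at x within I)"
      using deriv[of x] sub that by (auto simp: has_field_derivative_def)
    then show ?thesis
      by (rule has_derivative_subset) (rule sub)
  qed
  from mvt_very_simple[OF \<open>s \<le> t\<close> this]
  obtain \<xi> where \<xi>: "\<xi> \<in> {s..t}" "f t - f s = f' \<xi> * (t - s)"
    by blast
  have "\<xi> islimpt I"
    using \<xi>(1) \<open>s < t\<close> sub islimpt_subset[of \<xi> "{s..t}" I] by simp
  then have "f' \<xi> \<le> 0"
    using nonpos \<xi>(1) sub trivial_limit_within by blast
  then have "f' \<xi> * (t - s) \<le> 0"
    using \<open>s \<le> t\<close> by (simp add: mult_nonpos_nonneg)
  with \<xi>(2) show ?thesis
    by simp
qed simp

locale hilbert_flow =
  fixes I :: "real set" and \<alpha> :: "real \<Rightarrow> real \<Rightarrow> real"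
  assumes interval: "is_interval I"
    and smooth: "smooth_on (I \<times> UNIV) (\<lambda>(\<tau>, \<theta>). \<alpha> \<tau> \<theta>)"
    and periodic: "\<forall>\<tau>\<in>I. \<forall>\<theta>. \<alpha> \<tau> (\<theta> + 2 * pi) = \<alpha> \<tau> \<theta>"
    and flow: "\<forall>\<tau>\<in>I. \<forall>\<theta>. ((\<lambda>t. complex_of_real (\<alpha> t \<theta>)) has_vector_derivative
            (- complex_of_real (\<alpha> \<tau> \<theta>) * Lam (\<lambda>x. complex_of_real (\<alpha> \<tau> x)) \<theta>
             + Hil (\<lambda>x. complex_of_real (\<alpha> \<tau> x)) \<theta> * Dop (\<lambda>x. complex_of_real (\<alpha> \<tau> x)) \<theta>))
            (at \<tau> within I)"
begin

definition partial_\<theta> :: "(real \<times> real \<Rightarrow> real) \<Rightarrow> real \<times> real \<Rightarrow> real" where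
  "partial_\<theta> f x = frechet_derivative f (at x within I \<times> UNIV) (0, 1)"

definition partial_\<tau>_\<alpha> :: "real \<times> real \<Rightarrow> real" where
  "partial_\<tau>_\<alpha> x = frechet_derivative (\<lambda>(\<tau>, \<theta>). \<alpha> \<tau> \<theta>) (at x within I \<times> UNIV) (1, 0)"

lemma smooth_on_partial_\<theta>: "smooth_on (I \<times> UNIV) f \<Longrightarrow> smooth_on (I \<times> UNIV) (partial_\<theta> f)"
  unfolding partial_\<theta>_def by (rule smooth_on_frechet_derivative)

lemma has_real_derivative_partial_\<theta>:
  assumes "smooth_on (I \<times> UNIV) f" and "\<tau> \<in> I"
  shows "((\<lambda>\<theta>. f (\<tau>, \<theta>)) has_real_derivative partial_\<theta> f (\<tau>, \<theta>)) (at \<theta>)"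
  unfolding partial_\<theta>_def using assms
  by (intro has_real_derivative_compose_frechet_derivative[where g = "\<lambda>\<theta>. (\<tau>, \<theta>)"] smooth_on_differentiable)
     (auto intro!: derivative_eq_intros)

lemma has_real_derivative_partial_\<tau>_\<alpha>:
  assumes "\<tau> \<in> I"
  shows "((\<lambda>t. \<alpha> t \<theta>) has_real_derivative partial_\<tau>_\<alpha> (\<tau>, \<theta>)) (at \<tau> within I)"
  unfolding partial_\<tau>_\<alpha>_def using assms
  by (intro has_real_derivative_compose_frechet_derivative[where g = "\<lambda>t. (t, \<theta>)" and
        f = "\<lambda>(\<tau>, \<theta>). \<alpha> \<tau> \<theta>", simplified] smooth_on_differentiable[OF smooth])
     (auto intro!: derivative_eq_intros)

lemma periodic_C3_slice:
  assumes "\<tau> \<in> I"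
  shows "periodic_C3 (\<alpha> \<tau>) (\<lambda>\<theta>. partial_\<theta> (\<lambda>(\<tau>, \<theta>). \<alpha> \<tau> \<theta>) (\<tau>, \<theta>))
    (\<lambda>\<theta>. (partial_\<theta> ^^ 2) (\<lambda>(\<tau>, \<theta>). \<alpha> \<tau> \<theta>) (\<tau>, \<theta>)) (\<lambda>\<theta>. (partial_\<theta> ^^ 3) (\<lambda>(\<tau>, \<theta>). \<alpha> \<tau> \<theta>) (\<tau>, \<theta>))"
proof -
  let ?f = "\<lambda>(\<tau>, \<theta>). \<alpha> \<tau> \<theta>"
  have smooth_iter: "smooth_on (I \<times> UNIV) ((partial_\<theta> ^^ n) ?f)" for n
    by (induction n) (simp_all add: smooth smooth_on_partial_\<theta>)
  have deriv: "((\<lambda>\<theta>. (partial_\<theta> ^^ n) ?f (\<tau>, \<theta>)) has_real_derivative (partial_\<theta> ^^ Suc n) ?f (\<tau>, \<theta>)) (at \<theta>)"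
    for n \<theta>
    using has_real_derivative_partial_\<theta>[OF smooth_iter assms] by simp
  show ?thesis
  proof
    show "continuous_on UNIV (\<lambda>\<theta>. (partial_\<theta> ^^ 3) ?f (\<tau>, \<theta>))"
      using deriv[of 3] by (meson DERIV_continuous continuous_at_imp_continuous_on)
    show "\<alpha> \<tau> (\<theta> + 2 * pi) = \<alpha> \<tau> \<theta>" for \<theta>
      using periodic assms by blast
  qed (use deriv[of 0] deriv[of 1] deriv[of 2] in \<open>simp_all add: numeral_2_eq_2 numeral_3_eq_3\<close>)
qed

lemma continuous_on_partial_\<tau>_\<alpha>: "continuous_on (I \<times> UNIV) partial_\<tau>_\<alpha>"
  unfolding partial_\<tau>_\<alpha>_def by (intro smooth_on_continuous_on smooth_on_frechet_derivative smooth)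

lemma has_real_derivative_integral:
  assumes "\<tau> \<in> I"
  shows "((\<lambda>t. integral {0..2*pi} (\<alpha> t)) has_real_derivative integral {0..2*pi} (\<lambda>\<theta>. partial_\<tau>_\<alpha> (\<tau>, \<theta>)))
    (at \<tau> within I)"
proof -
  have "continuous_on (I \<times> cbox 0 (2 * pi)) (\<lambda>(t, \<theta>). partial_\<tau>_\<alpha> (t, \<theta>))"
    unfolding case_prod_eta by (rule continuous_on_subset[OF continuous_on_partial_\<tau>_\<alpha>]) auto
  moreover have "\<alpha> t integrable_on cbox 0 (2 * pi)" if "t \<in> I" for t
    using periodic_C3.continuous_u[OF periodic_C3_slice[OF that]] by (rule integrable_continuous)
  ultimately show ?thesis
    using leibniz_rule_field_derivative[where f = \<alpha> and fx = "\<lambda>t \<theta>. partial_\<tau>_\<alpha> (t, \<theta>)"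
        and U = I and a = 0 and b = "2 * pi"]
      has_real_derivative_partial_\<tau>_\<alpha> assms is_interval_convex[OF interval] by simp
qed

text \<open>Where the derivative in \<open>\<tau>\<close> is determined, the flow equation identifies it.\<close>
lemma integral_partial_\<tau>_\<alpha>:
  assumes "\<tau> \<in> I" and nontrivial: "at \<tau> within I \<noteq> bot"
  shows "complex_of_real (integral {0..2*pi} (\<lambda>\<theta>. partial_\<tau>_\<alpha> (\<tau>, \<theta>)))
    = - 4 * ip (pos_part (\<lambda>x. complex_of_real (\<alpha> \<tau> x))) (Lam (pos_part (\<lambda>x. complex_of_real (\<alpha> \<tau> x))))"
proof -
  interpret periodic_C3 "\<alpha> \<tau>" "\<lambda>\<theta>. partial_\<theta> (\<lambda>(\<tau>, \<theta>). \<alpha> \<tau> \<theta>) (\<tau>, \<theta>)"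
    "\<lambda>\<theta>. (partial_\<theta> ^^ 2) (\<lambda>(\<tau>, \<theta>). \<alpha> \<tau> \<theta>) (\<tau>, \<theta>)" "\<lambda>\<theta>. (partial_\<theta> ^^ 3) (\<lambda>(\<tau>, \<theta>). \<alpha> \<tau> \<theta>) (\<tau>, \<theta>)"
    by (rule periodic_C3_slice[OF \<open>\<tau> \<in> I\<close>])
  have "continuous_on {0..2*pi} (\<lambda>\<theta>. partial_\<tau>_\<alpha> (\<tau>, \<theta>))"
    using \<open>\<tau> \<in> I\<close>
    by (intro continuous_on_compose2[OF continuous_on_partial_\<tau>_\<alpha>] continuous_intros) auto
  then have "complex_of_real (integral {0..2*pi} (\<lambda>\<theta>. partial_\<tau>_\<alpha> (\<tau>, \<theta>)))
      = integral {0..2*pi} (\<lambda>\<theta>. complex_of_real (partial_\<tau>_\<alpha> (\<tau>, \<theta>)))"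
    by (intro integral_unique[symmetric] has_integral_of_real integrable_integral integrable_continuous_interval)
  also have "\<dots> = integral {0..2*pi} (\<lambda>\<theta>. - U \<theta> * Lam U \<theta> + Hil U \<theta> * Dop U \<theta>)"
  proof (rule integral_cong)
    fix \<theta>
    show "complex_of_real (partial_\<tau>_\<alpha> (\<tau>, \<theta>)) = - U \<theta> * Lam U \<theta> + Hil U \<theta> * Dop U \<theta>"
      using has_vector_derivative_of_real[OF has_real_derivative_partial_\<tau>_\<alpha>[OF \<open>\<tau> \<in> I\<close>]] flow \<open>\<tau> \<in> I\<close>
      by (intro vector_derivative_unique_within[OF nontrivial]) auto
  qed
  also have "\<dots> = - 4 * ip (pos_part U) (Lam (pos_part U))"
    by (rule integral_flow_rhs)
  finally show ?thesis .
qed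

lemma has_vector_derivative_integral:
  assumes "\<tau> \<in> I"
  shows "((\<lambda>t. complex_of_real (integral {0..2*pi} (\<alpha> t))) has_vector_derivative
    - 4 * ip (pos_part (\<lambda>x. complex_of_real (\<alpha> \<tau> x))) (Lam (pos_part (\<lambda>x. complex_of_real (\<alpha> \<tau> x)))))
    (at \<tau> within I)"
proof (cases "at \<tau> within I = bot")
  case True
  show ?thesis
    unfolding True has_vector_derivative_def has_derivative_def
    by (intro conjI bounded_linear_scaleR_left tendsto_bot)
next
  case False
  have "((\<lambda>t. complex_of_real (integral {0..2*pi} (\<alpha> t))) has_vector_derivative
      complex_of_real (integral {0..2*pi} (\<lambda>\<theta>. partial_\<tau>_\<alpha> (\<tau>, \<theta>)))) (at \<tau> within I)"
    by (rule has_vector_derivative_of_real[OF has_real_derivative_integral[OF assms]])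
  then show ?thesis
    unfolding integral_partial_\<tau>_\<alpha>[OF assms False] .
qed

lemma ip_pos_part_Lam_slice_nonneg:
  "\<tau> \<in> I \<Longrightarrow> ip (pos_part (\<lambda>x. complex_of_real (\<alpha> \<tau> x))) (Lam (pos_part (\<lambda>x. complex_of_real (\<alpha> \<tau> x))))
    \<in> \<real>\<^sub>\<ge>\<^sub>0"
  by (rule periodic_C3.ip_pos_part_Lam_nonneg[OF periodic_C3_slice])

lemma integral_antimono:
  assumes "s \<in> I" "t \<in> I" "s \<le> t"
  shows "integral {0..2*pi} (\<alpha> t) \<le> integral {0..2*pi} (\<alpha> s)"
proof (rule antimono_if_has_real_derivative_nonpos[OF interval has_real_derivative_integral _ assms])
  fix \<tau> assume "\<tau> \<in> I" and "at \<tau> within I \<noteq> bot"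
  then have "integral {0..2*pi} (\<lambda>\<theta>. partial_\<tau>_\<alpha> (\<tau>, \<theta>))
      = Re (- 4 * ip (pos_part (\<lambda>x. complex_of_real (\<alpha> \<tau> x))) (Lam (pos_part (\<lambda>x. complex_of_real (\<alpha> \<tau> x)))))"
    by (metis integral_partial_\<tau>_\<alpha> Re_complex_of_real)
  then show "integral {0..2*pi} (\<lambda>\<theta>. partial_\<tau>_\<alpha> (\<tau>, \<theta>)) \<le> 0"
    using ip_pos_part_Lam_slice_nonneg[OF \<open>\<tau> \<in> I\<close>] by (simp add: complex_nonneg_Reals_iff)
qed

end

theorem lemma6p2:
  fixes I :: "real set" and \<alpha> :: "real \<Rightarrow> real \<Rightarrow> real"
  assumes "is_interval I"
    and "smooth_on (I \<times> UNIV) (\<lambda>(\<tau>, \<theta>). \<alpha> \<tau> \<theta>)"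
    and "\<forall>\<tau>\<in>I. \<forall>\<theta>. \<alpha> \<tau> (\<theta> + 2 * pi) = \<alpha> \<tau> \<theta>"
    and "\<forall>\<tau>\<in>I. \<forall>\<theta>. ((\<lambda>t. complex_of_real (\<alpha> t \<theta>)) has_vector_derivative
            (- complex_of_real (\<alpha> \<tau> \<theta>) * Lam (\<lambda>x. complex_of_real (\<alpha> \<tau> x)) \<theta>
             + Hil (\<lambda>x. complex_of_real (\<alpha> \<tau> x)) \<theta> * Dop (\<lambda>x. complex_of_real (\<alpha> \<tau> x)) \<theta>))
            (at \<tau> within I)"
  shows "(\<forall>\<tau>\<in>I.
            ((\<lambda>t. complex_of_real (integral {0..2*pi} (\<alpha> t))) has_vector_derivative
               (- 4 * ip (pos_part (\<lambda>x. complex_of_real (\<alpha> \<tau> x)))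
                         (Lam (pos_part (\<lambda>x. complex_of_real (\<alpha> \<tau> x)))))) (at \<tau> within I)
          \<and> (- 4 * ip (pos_part (\<lambda>x. complex_of_real (\<alpha> \<tau> x)))
                      (Lam (pos_part (\<lambda>x. complex_of_real (\<alpha> \<tau> x))))) \<in> \<real>
          \<and> Re (- 4 * ip (pos_part (\<lambda>x. complex_of_real (\<alpha> \<tau> x)))
                         (Lam (pos_part (\<lambda>x. complex_of_real (\<alpha> \<tau> x))))) \<le> 0)
       \<and> (\<forall>s\<in>I. \<forall>t\<in>I. s \<le> t \<longrightarrow> integral {0..2*pi} (\<alpha> t) \<le> integral {0..2*pi} (\<alpha> s))
       \<and> (\<forall>\<tau>\<in>I. ip (pos_part (\<lambda>x. complex_of_real (\<alpha> \<tau> x)))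
                     (Lam (pos_part (\<lambda>x. complex_of_real (\<alpha> \<tau> x)))) = 0
              \<longrightarrow> (\<exists>c. \<forall>\<theta>. \<alpha> \<tau> \<theta> = c))"
proof -
  interpret hilbert_flow I \<alpha>
    using assms by unfold_locales
  have sign: "- 4 * z \<in> \<real> \<and> Re (- 4 * z) \<le> 0" if "z \<in> \<real>\<^sub>\<ge>\<^sub>0" for z :: complex
    using that by (simp add: complex_nonneg_Reals_iff complex_is_Real_iff)
  show ?thesis
    using has_vector_derivative_integral sign[OF ip_pos_part_Lam_slice_nonneg] integral_antimono
      periodic_C3.constant_if_ip_pos_part_Lam_eq_0[OF periodic_C3_slice] by blast
qed

end
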